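(* Let $R_1$ and $R_2$ be commutative rings with nonzero identity, let $I_1$ be a proper ideal of $R_1$ and $I_2$ a proper ideal of $R_2$, and put $R=R_1\times R_2$ and $I=I_1\times I_2$. Then the graph $\Gamma''_{I}(R)$ is connected and $\operatorname{diam}(\Gamma''_{I}(R))\leq 3$.
   Context: All rings are commutative with nonzero identity; $R_1\times R_2$ has componentwise operations and $I_1\times I_2$ is an ideal of it. For a ring $R$ and an ideal $I$ of $R$, $\Gamma''_I(R)$ is the simple undirected graph whose vertex set is $\{x\in R\setminus I : xR+I\neq R\}$, and two distinct vertices $x,y$ are adjacent if and only if $x\notin yR+I$ and $y\notin xR+I$. A graph is connected if any two distinct vertices are joined by a path; the diameter is the supremum of the distances (lengths of shortest paths) between vertices. *)

theory Defs
  imports "HOL-Algebra.Chinese_Remainder" "HOL-Library.Extended_Nat"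
begin

definition elt_ideal_sum :: "('a, 'm) ring_scheme \<Rightarrow> 'a set \<Rightarrow> 'a \<Rightarrow> 'a set" where
  "elt_ideal_sum R I x = {x \<otimes>\<^bsub>R\<^esub> r \<oplus>\<^bsub>R\<^esub> i | r i. r \<in> carrier R \<and> i \<in> I}"

definition gverts :: "('a, 'm) ring_scheme \<Rightarrow> 'a set \<Rightarrow> 'a set" where
  "gverts R I = {x \<in> carrier R - I. elt_ideal_sum R I x \<noteq> carrier R}"

definition gadj :: "('a, 'm) ring_scheme \<Rightarrow> 'a set \<Rightarrow> 'a \<Rightarrow> 'a \<Rightarrow> bool" where
  "gadj R I x y \<longleftrightarrow> x \<in> gverts R I \<and> y \<in> gverts R I \<and> x \<noteq> y \<and>
     x \<notin> elt_ideal_sum R I y \<and> y \<notin> elt_ideal_sum R I x"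

definition is_walk :: "'a set \<Rightarrow> ('a \<Rightarrow> 'a \<Rightarrow> bool) \<Rightarrow> 'a \<Rightarrow> 'a \<Rightarrow> 'a list \<Rightarrow> bool" where
  "is_walk V E u v p \<longleftrightarrow> p \<noteq> [] \<and> hd p = u \<and> last p = v \<and> set p \<subseteq> V \<and> successively E p"

definition graph_connected :: "'a set \<Rightarrow> ('a \<Rightarrow> 'a \<Rightarrow> bool) \<Rightarrow> bool" where
  "graph_connected V E \<longleftrightarrow> (\<forall>u\<in>V. \<forall>v\<in>V. u \<noteq> v \<longrightarrow> (\<exists>p. is_walk V E u v p))"

text \<open>Distance (infinity if no path) and diameter (supremum of distances).\<close>
definition graph_dist :: "'a set \<Rightarrow> ('a \<Rightarrow> 'a \<Rightarrow> bool) \<Rightarrow> 'a \<Rightarrow> 'a \<Rightarrow> enat" where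
  "graph_dist V E u v = (INF p \<in> {p. is_walk V E u v p}. enat (length p - 1))"

definition graph_diam :: "'a set \<Rightarrow> ('a \<Rightarrow> 'a \<Rightarrow> bool) \<Rightarrow> enat" where
  "graph_diam V E = (SUP (u, v) \<in> V \<times> V. graph_dist V E u v)"

end

theory Submission
  imports Defs
begin

text \<open>The idempotents \<open>(\<one>, \<zero>)\<close> and \<open>(\<zero>, \<one>)\<close> of \<open>R\<^sub>1 \<times> R\<^sub>2\<close> are adjacent vertices
  of \<open>\<Gamma>''\<^sub>I(R)\<close>, and every vertex \<open>(a, b)\<close> is adjacent to one of them: to \<open>(\<one>, \<zero>)\<close>
  as soon as \<open>b \<notin> I\<^sub>2\<close> and \<open>aR\<^sub>1 + I\<^sub>1 \<noteq> R\<^sub>1\<close>, symmetrically for \<open>(\<zero>, \<one>)\<close>, and if neither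
  applies then \<open>(a, b)\<close> lies in \<open>I\<close> or generates \<open>R\<close> modulo \<open>I\<close>, so is no vertex.
  Hence any two vertices are joined by a walk \<open>u, h, h', v\<close> through these hubs.\<close>

lemma is_walk_Cons_Cons:
  "is_walk V E u v (u # w # ws) \<longleftrightarrow> u \<in> V \<and> E u w \<and> is_walk V E w v (w # ws)"
  unfolding is_walk_def by auto

lemma is_walk_singleton: "is_walk V E u v [w] \<longleftrightarrow> u = w \<and> v = w \<and> w \<in> V"
  unfolding is_walk_def by auto

lemma graph_dist_le_walk_length:
  assumes "is_walk V E u v p"
  shows "graph_dist V E u v \<le> enat (length p - 1)"
  unfolding graph_dist_def using assms by (intro INF_lower) auto

lemma graph_diam_le:
  assumes "\<And>u v. u \<in> V \<Longrightarrow> v \<in> V \<Longrightarrow> \<exists>p. is_walk V E u v p \<and> length p \<le> Suc n"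
  shows "graph_diam V E \<le> enat n"
  unfolding graph_diam_def
proof (intro SUP_least, clarify)
  fix u v assume "u \<in> V" "v \<in> V"
  then obtain p where p: "is_walk V E u v p" "length p \<le> Suc n" using assms by blast
  have "graph_dist V E u v \<le> enat (length p - 1)" using graph_dist_le_walk_length[OF p(1)] .
  also have "\<dots> \<le> enat n" using p(2) by simp
  finally show "graph_dist V E u v \<le> enat n" .
qed

lemma graph_connected_diam_le_3_if_dominating_edge:
  assumes adj_in_V: "\<And>x y. E x y \<Longrightarrow> x \<in> V \<and> y \<in> V"
    and adj_sym: "\<And>x y. E x y \<Longrightarrow> E y x"
    and hubs_adj: "E h\<^sub>1 h\<^sub>2"
    and dominating: "\<And>x. x \<in> V \<Longrightarrow> E x h\<^sub>1 \<or> E x h\<^sub>2"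
  shows "graph_connected V E \<and> graph_diam V E \<le> 3"
proof -
  have short_walk: "\<exists>p. is_walk V E u v p \<and> length p \<le> 4" if "u \<in> V" "v \<in> V" for u v
  proof -
    obtain h h' where h: "E u h" "h \<in> {h\<^sub>1, h\<^sub>2}" and h': "E h' v" "h' \<in> {h\<^sub>1, h\<^sub>2}"
      using dominating[OF \<open>u \<in> V\<close>] dominating[OF \<open>v \<in> V\<close>] adj_sym by blast
    show ?thesis
    proof (cases "h = h'")
      case True
      then have "is_walk V E u v [u, h, v]"
        using h h' adj_in_V by (auto simp: is_walk_Cons_Cons is_walk_singleton)
      then show ?thesis by fastforce
    next
      case False
      then have "E h h'" using h(2) h'(2) hubs_adj adj_sym by blast
      then have "is_walk V E u v [u, h, h', v]"
        using h h' adj_in_V by (auto simp: is_walk_Cons_Cons is_walk_singleton)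
      then show ?thesis by fastforce
    qed
  qed
  have "graph_connected V E" unfolding graph_connected_def using short_walk by blast
  moreover have "graph_diam V E \<le> enat 3"
    using short_walk by (intro graph_diam_le) (simp add: numeral_eq_Suc)
  ultimately show ?thesis by (simp add: numeral_eq_enat)
qed

context ideal
begin

lemma elt_ideal_sum_subset_carrier:
  assumes "a \<in> carrier R"
  shows "elt_ideal_sum R I a \<subseteq> carrier R"
  unfolding elt_ideal_sum_def using assms by auto

lemma elt_ideal_sum_eq_carrier_iff:
  assumes "a \<in> carrier R"
  shows "elt_ideal_sum R I a = carrier R \<longleftrightarrow> \<one> \<in> elt_ideal_sum R I a"
proof
  assume "\<one> \<in> elt_ideal_sum R I a"
  then obtain r i where ri: "r \<in> carrier R" "i \<in> I" "\<one> = a \<otimes> r \<oplus> i"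
    unfolding elt_ideal_sum_def by auto
  have "c \<in> elt_ideal_sum R I a" if c: "c \<in> carrier R" for c
  proof -
    have "c = (a \<otimes> r \<oplus> i) \<otimes> c" using ri c by (metis l_one)
    also have "\<dots> = a \<otimes> (r \<otimes> c) \<oplus> i \<otimes> c" using ri c assms by (simp add: l_distr m_assoc)
    finally show ?thesis unfolding elt_ideal_sum_def using ri c I_r_closed by blast
  qed
  then show "elt_ideal_sum R I a = carrier R" using elt_ideal_sum_subset_carrier[OF assms] by blast
qed simp

lemma elt_ideal_sum_one: "elt_ideal_sum R I \<one> = carrier R"
proof -
  have "\<one> = \<one> \<otimes> \<one> \<oplus> \<zero>" by simp
  then have "\<one> \<in> elt_ideal_sum R I \<one>"
    unfolding elt_ideal_sum_def using one_closed additive_subgroup.zero_closed[OF is_additive_subgroup]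
    by blast
  then show ?thesis using elt_ideal_sum_eq_carrier_iff by simp
qed

lemma elt_ideal_sum_of_mem:
  assumes "a \<in> I"
  shows "elt_ideal_sum R I a = I"
proof
  show "elt_ideal_sum R I a \<subseteq> I" unfolding elt_ideal_sum_def using assms I_r_closed by auto
  have "i = a \<otimes> \<zero> \<oplus> i" if "i \<in> I" for i using that assms by simp
  then show "I \<subseteq> elt_ideal_sum R I a" unfolding elt_ideal_sum_def by blast
qed

lemma elt_ideal_sum_zero: "elt_ideal_sum R I \<zero> = I"
  using elt_ideal_sum_of_mem additive_subgroup.zero_closed[OF is_additive_subgroup] .

end

lemma RDirProd_mult: "(a, b) \<otimes>\<^bsub>RDirProd R S\<^esub> (c, d) = (a \<otimes>\<^bsub>R\<^esub> c, b \<otimes>\<^bsub>S\<^esub> d)"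
  by (simp add: RDirProd_def DirProd_def monoid.defs)

lemma RDirProd_add: "(a, b) \<oplus>\<^bsub>RDirProd R S\<^esub> (c, d) = (a \<oplus>\<^bsub>R\<^esub> c, b \<oplus>\<^bsub>S\<^esub> d)"
  by (simp add: RDirProd_def DirProd_def monoid.defs)

lemma elt_ideal_sum_RDirProd:
  "elt_ideal_sum (RDirProd R S) (I \<times> J) (a, b) = elt_ideal_sum R I a \<times> elt_ideal_sum S J b"
  unfolding elt_ideal_sum_def RDirProd_carrier by (auto simp: RDirProd_mult RDirProd_add)

lemma gverts_RDirProd_iff:
  assumes "ideal I\<^sub>1 R\<^sub>1" "ideal I\<^sub>2 R\<^sub>2"
  shows "(a, b) \<in> gverts (RDirProd R\<^sub>1 R\<^sub>2) (I\<^sub>1 \<times> I\<^sub>2) \<longleftrightarrow>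
    a \<in> carrier R\<^sub>1 \<and> b \<in> carrier R\<^sub>2 \<and> \<not> (a \<in> I\<^sub>1 \<and> b \<in> I\<^sub>2) \<and>
    \<not> (elt_ideal_sum R\<^sub>1 I\<^sub>1 a = carrier R\<^sub>1 \<and> elt_ideal_sum R\<^sub>2 I\<^sub>2 b = carrier R\<^sub>2)"
proof -
  interpret R\<^sub>1: ideal I\<^sub>1 R\<^sub>1 by fact
  interpret R\<^sub>2: ideal I\<^sub>2 R\<^sub>2 by fact
  have "A \<times> B = carrier R\<^sub>1 \<times> carrier R\<^sub>2 \<longleftrightarrow> A = carrier R\<^sub>1 \<and> B = carrier R\<^sub>2" for A B
    using R\<^sub>1.one_closed R\<^sub>2.one_closed by (auto simp: times_eq_iff)
  then show ?thesis unfolding gverts_def RDirProd_carrier by (simp add: elt_ideal_sum_RDirProd)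
qed

lemma one_zero_in_gverts_RDirProd:
  assumes "ideal I\<^sub>1 R\<^sub>1" "I\<^sub>1 \<noteq> carrier R\<^sub>1" "ideal I\<^sub>2 R\<^sub>2" "I\<^sub>2 \<noteq> carrier R\<^sub>2"
  shows "(\<one>\<^bsub>R\<^sub>1\<^esub>, \<zero>\<^bsub>R\<^sub>2\<^esub>) \<in> gverts (RDirProd R\<^sub>1 R\<^sub>2) (I\<^sub>1 \<times> I\<^sub>2)"
proof -
  interpret R\<^sub>1: ideal I\<^sub>1 R\<^sub>1 by fact
  interpret R\<^sub>2: ideal I\<^sub>2 R\<^sub>2 by fact
  have "\<one>\<^bsub>R\<^sub>1\<^esub> \<notin> I\<^sub>1" using R\<^sub>1.one_imp_carrier assms(2) by blast
  then show ?thesis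
    using assms(4) by (simp add: gverts_RDirProd_iff[OF assms(1,3)] ideal.elt_ideal_sum_of_mem[OF assms(3)])
qed

lemma zero_one_in_gverts_RDirProd:
  assumes "ideal I\<^sub>1 R\<^sub>1" "I\<^sub>1 \<noteq> carrier R\<^sub>1" "ideal I\<^sub>2 R\<^sub>2" "I\<^sub>2 \<noteq> carrier R\<^sub>2"
  shows "(\<zero>\<^bsub>R\<^sub>1\<^esub>, \<one>\<^bsub>R\<^sub>2\<^esub>) \<in> gverts (RDirProd R\<^sub>1 R\<^sub>2) (I\<^sub>1 \<times> I\<^sub>2)"
proof -
  interpret R\<^sub>1: ideal I\<^sub>1 R\<^sub>1 by fact
  interpret R\<^sub>2: ideal I\<^sub>2 R\<^sub>2 by fact
  have "\<one>\<^bsub>R\<^sub>2\<^esub> \<notin> I\<^sub>2" using R\<^sub>2.one_imp_carrier assms(4) by blast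
  then show ?thesis
    using assms(2) by (simp add: gverts_RDirProd_iff[OF assms(1,3)] ideal.elt_ideal_sum_of_mem[OF assms(1)])
qed

lemma gadj_RDirProd_one_zero:
  assumes "ideal I\<^sub>1 R\<^sub>1" "I\<^sub>1 \<noteq> carrier R\<^sub>1" "ideal I\<^sub>2 R\<^sub>2" "I\<^sub>2 \<noteq> carrier R\<^sub>2"
    and "(a, b) \<in> gverts (RDirProd R\<^sub>1 R\<^sub>2) (I\<^sub>1 \<times> I\<^sub>2)"
    and "b \<notin> I\<^sub>2" "elt_ideal_sum R\<^sub>1 I\<^sub>1 a \<noteq> carrier R\<^sub>1"
  shows "gadj (RDirProd R\<^sub>1 R\<^sub>2) (I\<^sub>1 \<times> I\<^sub>2) (a, b) (\<one>\<^bsub>R\<^sub>1\<^esub>, \<zero>\<^bsub>R\<^sub>2\<^esub>)"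
proof -
  have "(\<one>\<^bsub>R\<^sub>1\<^esub>, \<zero>\<^bsub>R\<^sub>2\<^esub>) \<in> gverts (RDirProd R\<^sub>1 R\<^sub>2) (I\<^sub>1 \<times> I\<^sub>2)"
    using one_zero_in_gverts_RDirProd[OF assms(1-4)] .
  moreover have "a \<in> carrier R\<^sub>1" using assms(5) gverts_RDirProd_iff[OF assms(1,3)] by blast
  ultimately show ?thesis
    using assms(5-7) unfolding gadj_def elt_ideal_sum_RDirProd
    by (auto simp: ideal.elt_ideal_sum_eq_carrier_iff[OF assms(1)] ideal.elt_ideal_sum_one[OF assms(1)]
      ideal.elt_ideal_sum_zero[OF assms(3)])
qed

lemma gadj_RDirProd_zero_one:
  assumes "ideal I\<^sub>1 R\<^sub>1" "I\<^sub>1 \<noteq> carrier R\<^sub>1" "ideal I\<^sub>2 R\<^sub>2" "I\<^sub>2 \<noteq> carrier R\<^sub>2"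
    and "(a, b) \<in> gverts (RDirProd R\<^sub>1 R\<^sub>2) (I\<^sub>1 \<times> I\<^sub>2)"
    and "a \<notin> I\<^sub>1" "elt_ideal_sum R\<^sub>2 I\<^sub>2 b \<noteq> carrier R\<^sub>2"
  shows "gadj (RDirProd R\<^sub>1 R\<^sub>2) (I\<^sub>1 \<times> I\<^sub>2) (a, b) (\<zero>\<^bsub>R\<^sub>1\<^esub>, \<one>\<^bsub>R\<^sub>2\<^esub>)"
proof -
  have "(\<zero>\<^bsub>R\<^sub>1\<^esub>, \<one>\<^bsub>R\<^sub>2\<^esub>) \<in> gverts (RDirProd R\<^sub>1 R\<^sub>2) (I\<^sub>1 \<times> I\<^sub>2)"
    using zero_one_in_gverts_RDirProd[OF assms(1-4)] .
  moreover have "b \<in> carrier R\<^sub>2" using assms(5) gverts_RDirProd_iff[OF assms(1,3)] by blast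
  ultimately show ?thesis
    using assms(5-7) unfolding gadj_def elt_ideal_sum_RDirProd
    by (auto simp: ideal.elt_ideal_sum_eq_carrier_iff[OF assms(3)] ideal.elt_ideal_sum_one[OF assms(3)]
      ideal.elt_ideal_sum_zero[OF assms(1)])
qed

lemma gverts_RDirProd_adj_one_zero_or_zero_one:
  assumes "ideal I\<^sub>1 R\<^sub>1" "I\<^sub>1 \<noteq> carrier R\<^sub>1" "ideal I\<^sub>2 R\<^sub>2" "I\<^sub>2 \<noteq> carrier R\<^sub>2"
    and x: "x \<in> gverts (RDirProd R\<^sub>1 R\<^sub>2) (I\<^sub>1 \<times> I\<^sub>2)"
  shows "gadj (RDirProd R\<^sub>1 R\<^sub>2) (I\<^sub>1 \<times> I\<^sub>2) x (\<one>\<^bsub>R\<^sub>1\<^esub>, \<zero>\<^bsub>R\<^sub>2\<^esub>)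
    \<or> gadj (RDirProd R\<^sub>1 R\<^sub>2) (I\<^sub>1 \<times> I\<^sub>2) x (\<zero>\<^bsub>R\<^sub>1\<^esub>, \<one>\<^bsub>R\<^sub>2\<^esub>)"
proof -
  obtain a b where ab: "x = (a, b)" by fastforce
  have "b \<notin> I\<^sub>2 \<and> elt_ideal_sum R\<^sub>1 I\<^sub>1 a \<noteq> carrier R\<^sub>1 \<or> a \<notin> I\<^sub>1 \<and> elt_ideal_sum R\<^sub>2 I\<^sub>2 b \<noteq> carrier R\<^sub>2"
    using x assms(2,4) unfolding ab gverts_RDirProd_iff[OF assms(1,3)]
    by (cases "a \<in> I\<^sub>1"; cases "b \<in> I\<^sub>2")
      (simp_all add: ideal.elt_ideal_sum_of_mem[OF assms(1)] ideal.elt_ideal_sum_of_mem[OF assms(3)])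
  then show ?thesis
    using gadj_RDirProd_one_zero[OF assms(1-4)] gadj_RDirProd_zero_one[OF assms(1-4)] x ab by blast
qed

theorem theorem2p9:
  fixes R1 :: "('a, 'm) ring_scheme" and R2 :: "('b, 'n) ring_scheme"
    and I1 :: "'a set" and I2 :: "'b set"
  assumes "cring R1" and "\<one>\<^bsub>R1\<^esub> \<noteq> \<zero>\<^bsub>R1\<^esub>"
    and "cring R2" and "\<one>\<^bsub>R2\<^esub> \<noteq> \<zero>\<^bsub>R2\<^esub>"
    and "ideal I1 R1" and "I1 \<noteq> carrier R1"
    and "ideal I2 R2" and "I2 \<noteq> carrier R2"
  shows "graph_connected (gverts (RDirProd R1 R2) (I1 \<times> I2)) (gadj (RDirProd R1 R2) (I1 \<times> I2))
    \<and> graph_diam (gverts (RDirProd R1 R2) (I1 \<times> I2)) (gadj (RDirProd R1 R2) (I1 \<times> I2)) \<le> 3"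
proof (rule graph_connected_diam_le_3_if_dominating_edge)
  note ideals = assms(5-8)
  let ?E = "gadj (RDirProd R1 R2) (I1 \<times> I2)"
  show "?E x y \<Longrightarrow> x \<in> gverts (RDirProd R1 R2) (I1 \<times> I2) \<and> y \<in> gverts (RDirProd R1 R2) (I1 \<times> I2)"
    and "?E x y \<Longrightarrow> ?E y x" for x y
    unfolding gadj_def by auto
  show "?E x (\<one>\<^bsub>R1\<^esub>, \<zero>\<^bsub>R2\<^esub>) \<or> ?E x (\<zero>\<^bsub>R1\<^esub>, \<one>\<^bsub>R2\<^esub>)"
    if "x \<in> gverts (RDirProd R1 R2) (I1 \<times> I2)" for x
    using gverts_RDirProd_adj_one_zero_or_zero_one[OF ideals that] .
  then show "?E (\<one>\<^bsub>R1\<^esub>, \<zero>\<^bsub>R2\<^esub>) (\<zero>\<^bsub>R1\<^esub>, \<one>\<^bsub>R2\<^esub>)"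
    using one_zero_in_gverts_RDirProd[OF ideals] unfolding gadj_def by blast
qed

end
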